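(* Let $F$ be a DQCNF. Applying autarky-reduction steps to $F$ as long as possible, in any order, yields the largest lean sub-DQCNF (the lean kernel) of $F$.
   Context: A DQCNF $F$ consists of a set $X$ of universal variables, a set $Y$ of existential variables, a dependency set $D_y\subseteq X$ for each $y\in Y$, and a matrix, a finite set of clauses over $X\cup Y$. An autarky for $F$ is a partial map $\varphi$ from a subset $\mathrm{dom}(\varphi)\subseteq Y$ to Boolean functions, where $\varphi(y)$ depends only on variables in $D_y$, such that every clause $C$ of $F$ either contains no variable of $\mathrm{dom}(\varphi)$ (then $\varphi$ does not touch $C$), or becomes a tautology (identically true as a function of all remaining variables) after substituting $\varphi(y)$ for each $y\in\mathrm{dom}(\varphi)$ occurring in $C$. An autarky is trivial if it touches no clause. $F$ is lean if it has no non-trivial autarky. A sub-DQCNF of $F$ is a DQCNF with the same variables and dependency sets whose matrix is a subset of the matrix of $F$; the lean kernel of $F$ is its largest lean sub-DQCNF (w.r.t. inclusion of clause sets). $F[\varphi]$ denotes the DQCNF with the same variables and dependency sets as $F$ whose matrix consists of the clauses of $F$ not touched by $\varphi$. An autarky-reduction step replaces a DQCNF $G$ by $G[\varphi]$ for some non-trivial autarky $\varphi$ of $G$. *)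

theory Defs
  imports Main
begin

datatype 'v lit = Pos 'v | Neg 'v

fun var :: "'v lit \<Rightarrow> 'v" where
  "var (Pos v) = v" | "var (Neg v) = v"

type_synonym 'v clause = "'v lit set"

record 'v dqcnf =
  univ :: "'v set"
  exist :: "'v set"
  dep :: "'v \<Rightarrow> 'v set"
  matrix :: "'v clause set"

definition wf_dqcnf :: "'v dqcnf \<Rightarrow> bool" where
  "wf_dqcnf F \<longleftrightarrow> finite (univ F) \<and> finite (exist F) \<and> univ F \<inter> exist F = {}
     \<and> (\<forall>y\<in>exist F. dep F y \<subseteq> univ F)
     \<and> finite (matrix F)
     \<and> (\<forall>C\<in>matrix F. finite C \<and> (\<forall>l\<in>C. var l \<in> univ F \<union> exist F))"

definition depends_only :: "'v set \<Rightarrow> (('v \<Rightarrow> bool) \<Rightarrow> bool) \<Rightarrow> bool" where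
  "depends_only S f \<longleftrightarrow> (\<forall>a b. (\<forall>x\<in>S. a x = b x) \<longrightarrow> f a = f b)"

type_synonym 'v skolem_map = "'v \<Rightarrow> (('v \<Rightarrow> bool) \<Rightarrow> bool) option"

definition touches :: "'v skolem_map \<Rightarrow> 'v clause \<Rightarrow> bool" where
  "touches \<phi> C \<longleftrightarrow> (\<exists>l\<in>C. var l \<in> dom \<phi>)"

fun lit_val :: "'v skolem_map \<Rightarrow> ('v \<Rightarrow> bool) \<Rightarrow> 'v lit \<Rightarrow> bool" where
  "lit_val \<phi> \<sigma> (Pos v) = (case \<phi> v of Some f \<Rightarrow> f \<sigma> | None \<Rightarrow> \<sigma> v)"
| "lit_val \<phi> \<sigma> (Neg v) = (\<not> (case \<phi> v of Some f \<Rightarrow> f \<sigma> | None \<Rightarrow> \<sigma> v))"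

definition taut_after :: "'v skolem_map \<Rightarrow> 'v clause \<Rightarrow> bool" where
  "taut_after \<phi> C \<longleftrightarrow> (\<forall>\<sigma>. \<exists>l\<in>C. lit_val \<phi> \<sigma> l)"

definition autarky :: "'v dqcnf \<Rightarrow> 'v skolem_map \<Rightarrow> bool" where
  "autarky F \<phi> \<longleftrightarrow> dom \<phi> \<subseteq> exist F
     \<and> (\<forall>y f. \<phi> y = Some f \<longrightarrow> depends_only (dep F y) f)
     \<and> (\<forall>C\<in>matrix F. \<not> touches \<phi> C \<or> taut_after \<phi> C)"

definition trivial_autarky :: "'v dqcnf \<Rightarrow> 'v skolem_map \<Rightarrow> bool" where
  "trivial_autarky F \<phi> \<longleftrightarrow> (\<forall>C\<in>matrix F. \<not> touches \<phi> C)"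

definition lean :: "'v dqcnf \<Rightarrow> bool" where
  "lean F \<longleftrightarrow> (\<forall>\<phi>. autarky F \<phi> \<longrightarrow> trivial_autarky F \<phi>)"

definition sub_dqcnf :: "'v dqcnf \<Rightarrow> 'v dqcnf \<Rightarrow> bool" where
  "sub_dqcnf G F \<longleftrightarrow> univ G = univ F \<and> exist G = exist F \<and> dep G = dep F
     \<and> more G = more F \<and> matrix G \<subseteq> matrix F"

definition apply_aut :: "'v dqcnf \<Rightarrow> 'v skolem_map \<Rightarrow> 'v dqcnf" where
  "apply_aut F \<phi> = F\<lparr>matrix := {C\<in>matrix F. \<not> touches \<phi> C}\<rparr>"

definition aut_step :: "'v dqcnf \<Rightarrow> 'v dqcnf \<Rightarrow> bool" where
  "aut_step G G' \<longleftrightarrow> (\<exists>\<phi>. autarky G \<phi> \<and> \<not> trivial_autarky G \<phi> \<and> G' = apply_aut G \<phi>)"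

definition is_lean_kernel :: "'v dqcnf \<Rightarrow> 'v dqcnf \<Rightarrow> bool" where
  "is_lean_kernel K F \<longleftrightarrow> sub_dqcnf K F \<and> lean K
     \<and> (\<forall>G. sub_dqcnf G F \<and> lean G \<longrightarrow> matrix G \<subseteq> matrix K)"

end

theory Submission
  imports Defs
begin

text \<open>An autarky of G restricts to an autarky of every sub-DQCNF H of G, and if H is lean this
  restriction touches no clause of H; so an autarky-reduction step never removes a clause
  belonging to a lean sub-DQCNF. Hence every reduct contains every lean sub-DQCNF of F, and a
  reduct admitting no further step is itself lean, i.e. it is the lean kernel.\<close>

lemma sub_dqcnf_refl [simp]: "sub_dqcnf F F"
  by (simp add: sub_dqcnf_def)

lemma sub_dqcnf_trans: "sub_dqcnf H G \<Longrightarrow> sub_dqcnf G F \<Longrightarrow> sub_dqcnf H F"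
  by (auto simp: sub_dqcnf_def)

lemma sub_dqcnf_apply_aut: "sub_dqcnf (apply_aut F \<phi>) F"
  by (auto simp: sub_dqcnf_def apply_aut_def)

lemma autarky_sub_dqcnf:
  assumes "sub_dqcnf H G" and "autarky G \<phi>"
  shows "autarky H \<phi>"
  using assms by (auto simp: sub_dqcnf_def autarky_def)

lemma lean_sub_dqcnf_untouched:
  assumes "sub_dqcnf H G" and "lean H" and "autarky G \<phi>"
  shows "matrix H \<subseteq> matrix (apply_aut G \<phi>)"
proof -
  have "trivial_autarky H \<phi>"
    using assms autarky_sub_dqcnf by (auto simp: lean_def)
  then show ?thesis
    using \<open>sub_dqcnf H G\<close> by (auto simp: trivial_autarky_def apply_aut_def sub_dqcnf_def)
qed

lemma aut_step_sub_dqcnf: "aut_step G G' \<Longrightarrow> sub_dqcnf G' G"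
  by (auto simp: aut_step_def sub_dqcnf_apply_aut)

lemma aut_step_keeps_lean_sub_dqcnf:
  assumes "aut_step G G'" and "sub_dqcnf H G" and "lean H"
  shows "matrix H \<subseteq> matrix G'"
  using assms lean_sub_dqcnf_untouched by (auto simp: aut_step_def)

lemma aut_steps_sub_dqcnf:
  assumes "aut_step\<^sup>*\<^sup>* F G"
  shows "sub_dqcnf G F"
  using assms by induction (auto intro: sub_dqcnf_trans aut_step_sub_dqcnf)

lemma aut_steps_keep_lean_sub_dqcnf:
  assumes "aut_step\<^sup>*\<^sup>* F G" and "sub_dqcnf H F" and "lean H"
  shows "matrix H \<subseteq> matrix G"
  using assms(1)
proof (induction rule: rtranclp_induct)
  case base
  show ?case using assms(2) by (simp add: sub_dqcnf_def)
next
  case (step G G')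
  have "sub_dqcnf H G"
    using assms(2) aut_steps_sub_dqcnf[OF step.hyps(1)] step.IH by (simp add: sub_dqcnf_def)
  then show ?case
    using aut_step_keeps_lean_sub_dqcnf step.hyps(2) assms(3) by blast
qed

lemma lean_if_no_aut_step: "\<not> (\<exists>G'. aut_step G G') \<Longrightarrow> lean G"
  by (auto simp: lean_def aut_step_def)

theorem lemma4:
  fixes F G :: "'v dqcnf"
  assumes "wf_dqcnf F"
    and "aut_step\<^sup>*\<^sup>* F G"
    and "\<not> (\<exists>G'. aut_step G G')"
  shows "is_lean_kernel G F"
  unfolding is_lean_kernel_def
  using aut_steps_sub_dqcnf[OF assms(2)] lean_if_no_aut_step[OF assms(3)]
    aut_steps_keep_lean_sub_dqcnf[OF assms(2)]
  by blast

end
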